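(* Let $q$ be a prime power and let $n_1,n_2$ be coprime odd positive integers, each coprime to $q$. If $x-1$ is the only SCRIM factor of $x^{n_1}-1$ and the only SCRIM factor of $x^{n_2}-1$ in $\mathbb{F}_{q^2}[x]$, then $|\Omega_{q^2,n_1n_2}|=|\Omega_{q^2,n_1}|\,|\Omega_{q^2,n_2}|=1$.
   Context: $\mathbb{F}_{q^2}$ is the finite field with $q^2$ elements. For $\alpha\in\mathbb{F}_{q^2}$ put $\bar\alpha=\alpha^q$, and for $f(x)=\sum_i f_ix^i$ put $\overline{f(x)}=\sum_i \bar f_i x^i$. For $f(x)$ with $f(0)\neq 0$, $f^*(x)=x^{\deg f}f(0)^{-1}f(1/x)$ and $f^\dagger(x)=\overline{f^*(x)}$. A polynomial is SCRIM if it is monic, irreducible over $\mathbb{F}_{q^2}$, has nonzero constant term, and satisfies $f=f^\dagger$. $\Omega_{q^2,n}$ denotes the set of SCRIM polynomials in $\mathbb{F}_{q^2}[x]$ dividing $x^n-1$. *)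

theory Defs
  imports "HOL-Computational_Algebra.Computational_Algebra" "HOL-Library.Cardinality"
begin

text \<open>Conjugation on F_{q^2}: alpha bar = alpha^q, applied coefficientwise.\<close>
definition conj_poly :: "nat \<Rightarrow> 'a::field poly \<Rightarrow> 'a poly" where
  "conj_poly q f = map_poly (\<lambda>a. a ^ q) f"

text \<open>f^*(x) = x^(deg f) f(0)^(-1) f(1/x); note x^(deg f) f(1/x) is reflect_poly f.\<close>
definition recip_poly :: "'a::field poly \<Rightarrow> 'a poly" where
  "recip_poly f = smult (inverse (coeff f 0)) (reflect_poly f)"

definition dagger_poly :: "nat \<Rightarrow> 'a::field poly \<Rightarrow> 'a poly" where
  "dagger_poly q f = conj_poly q (recip_poly f)"

definition SCRIM :: "nat \<Rightarrow> 'a::field poly \<Rightarrow> bool" where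
  "SCRIM q f \<longleftrightarrow> lead_coeff f = 1 \<and> irreducible f \<and> coeff f 0 \<noteq> 0 \<and> f = dagger_poly q f"

definition Omega :: "nat \<Rightarrow> nat \<Rightarrow> 'a::field poly set" where
  "Omega q n = {f. SCRIM q f \<and> f dvd (monom 1 n - 1)}"

definition prime_power :: "nat \<Rightarrow> bool" where
  "prime_power q \<longleftrightarrow> (\<exists>p k. prime p \<and> k > 0 \<and> q = p ^ k)"

end

theory Submission
  imports Defs
begin

(* Let f be SCRIM with f | x^K - 1. Modulo x^K - 1 we have x^(-1) = x^(K-1), hence
   x^(deg G) R(x^(K-1)) = G(x) for the reversal R(x) = x^(deg G) G(1/x) of any G. As f is prime
   to x, f | G(x^m) gives f | R(x^(m(K-1))); raising to the q-th power (Frobenius) and using that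
   G^dagger is a constant multiple of the conjugate of R, f | G^dagger(x^(m(K-1)q)).
   Now x^(n1 n2) - 1 = P(x^n2) with P = x^n1 - 1, so f divides g(x^n2) for a monic irreducible
   factor g of P. Applying the above to f = f^dagger and to g, f divides both g(x^(n2 L)) and
   g^dagger(x^(n2 L)) for L = (n1 n2 - 1) q; since g is irreducible this forces g | g^dagger, so
   g is SCRIM and g = x - 1. Then f | x^n2 - 1, whence f = x - 1. *)

lemma of_nat_CARD_eq_0: "of_nat CARD('a::{ring_1,finite}) = (0::'a)"
proof -
  have "(\<Sum>x\<in>UNIV. x + 1) = (\<Sum>x\<in>UNIV. x :: 'a)"
    by (rule sum.reindex_bij_witness[of _ "\<lambda>x. x - 1" "\<lambda>x. x + 1"]) auto
  then show ?thesis by (simp add: sum.distrib)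
qed

lemma prime_power_CHARE:
  assumes "CARD('a::{field,finite}) = q ^ e" "prime_power q"
  obtains k where "prime CHAR('a)" "q = CHAR('a) ^ k"
proof -
  obtain p k where p: "prime p" "q = p ^ k"
    using assms(2) unfolding prime_power_def by blast
  have prime_char: "prime CHAR('a)"
    by (simp add: finite_imp_CHAR_pos prime_CHAR_semidom)
  have "CHAR('a) dvd CARD('a)"
    using of_nat_CARD_eq_0 of_nat_eq_0_iff_char_dvd by blast
  then have "CHAR('a) dvd p ^ (k * e)"
    by (simp add: assms(1) p(2) power_mult)
  then have "CHAR('a) = p"
    using prime_char p(1) by (metis prime_dvd_power primes_dvd_imp_eq)
  then show ?thesis using that prime_char p(2) by blast
qed

lemma pcompose_monom: "pcompose (monom c n) p = smult c (p ^ n)"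
  by (induction n) (simp_all add: monom_0 monom_Suc pcompose_pCons)

lemma pcompose_monom_monom:
  "pcompose (monom 1 m) (monom 1 n) = (monom 1 (m * n) :: 'a::comm_semiring_1 poly)"
  by (simp add: pcompose_monom monom_power mult.commute)

lemma pcompose_x_minus_one: "pcompose [:-1, 1:] p = p - (1 :: 'a::comm_ring_1 poly)"
  by (simp add: pcompose_pCons one_pCons)

lemma pcompose_as_sum:
  assumes "degree p \<le> n"
  shows "pcompose p r = (\<Sum>i\<le>n. smult (coeff p i) (r ^ i))"
proof -
  have "pcompose p r = pcompose (\<Sum>i\<le>n. monom (coeff p i) i) r"
    by (simp add: poly_as_sum_of_monoms' assms)
  then show ?thesis by (simp add: pcompose_sum pcompose_monom)
qed

lemma is_unit_pcompose: "is_unit p \<Longrightarrow> is_unit (pcompose p r)"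
  by (metis dvdE dvdI pcompose_1 pcompose_mult)

lemma monom_minus_one_dvd: "monom 1 n - 1 dvd (monom 1 (n * m) - 1 :: 'a::comm_ring_1 poly)"
proof -
  have "monom 1 (n * m) = (monom 1 n :: 'a poly) ^ m" by (simp add: monom_power)
  then show ?thesis by (simp add: power_diff_1_eq)
qed

lemma reflect_poly_pcompose_cong:
  fixes G y z J :: "'a::comm_ring_1 poly"
  assumes "J dvd y * z - 1"
  shows "J dvd y ^ degree G * pcompose (reflect_poly G) z - pcompose G y"
proof -
  define d where "d = degree G"
  have "pcompose (reflect_poly G) z = (\<Sum>i\<le>d. smult (coeff G (d - i)) (z ^ i))"
    unfolding pcompose_as_sum[OF degree_reflect_poly_le, folded d_def]
    by (intro sum.cong) (simp_all add: coeff_reflect_poly d_def)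
  also have "\<dots> = (\<Sum>i\<le>d. smult (coeff G i) (z ^ (d - i)))"
    by (rule sum.reindex_bij_witness[of _ "\<lambda>i. d - i" "\<lambda>i. d - i"]) auto
  finally have "y ^ d * pcompose (reflect_poly G) z
      = (\<Sum>i\<le>d. y ^ d * smult (coeff G i) (z ^ (d - i)))"
    by (simp add: sum_distrib_left)
  also have "\<dots> = (\<Sum>i\<le>d. smult (coeff G i) (y ^ i * (y * z) ^ (d - i)))"
    by (intro sum.cong refl) (simp add: power_mult_distrib flip: mult.assoc power_add)
  moreover have "pcompose G y = (\<Sum>i\<le>d. smult (coeff G i) (y ^ i))"
    by (simp add: pcompose_as_sum d_def)
  ultimately have "y ^ d * pcompose (reflect_poly G) z - pcompose G y
      = (\<Sum>i\<le>d. smult (coeff G i) (y ^ i * ((y * z) ^ (d - i) - 1)))"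
    by (simp add: right_diff_distrib smult_diff_right flip: sum_subtractf)
  also have "J dvd \<dots>"
    using dvd_trans[OF assms] by (intro dvd_sum dvd_smult dvd_mult) (simp add: power_diff_1_eq)
  finally show ?thesis unfolding d_def .
qed

lemma conj_poly_smult:
  "q > 0 \<Longrightarrow> conj_poly q (smult c p) = smult (c ^ q) (conj_poly q p)"
  by (intro poly_eqI) (simp add: conj_poly_def coeff_map_poly power_mult_distrib)

lemma frobenius_pcompose_monom:
  fixes P :: "'a::field poly"
  assumes "prime CHAR('a)" "q = CHAR('a) ^ k"
  shows "pcompose P (monom 1 m) ^ q = pcompose (conj_poly q P) (monom 1 (m * q))"
proof (induction P)
  case 0
  have "q > 0" using assms prime_gt_0_nat by simp
  then show ?case by (simp add: conj_poly_def)
next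
  case (pCons a P)
  have "q > 0" using assms prime_gt_0_nat by simp
  have dream: "(x + y) ^ q = x ^ q + y ^ q" for x y :: "'a poly"
    by (rule freshmans_dream') (use assms in auto)
  have "pcompose (pCons a P) (monom 1 m) ^ q = ([:a:] + monom 1 m * pcompose P (monom 1 m)) ^ q"
    by (simp add: pcompose_pCons)
  also have "\<dots> = [:a ^ q:] + monom 1 (m * q) * pcompose (conj_poly q P) (monom 1 (m * q))"
    by (simp add: dream power_mult_distrib pCons.IH monom_power mult.commute poly_const_pow)
  also have "\<dots> = pcompose (conj_poly q (pCons a P)) (monom 1 (m * q))"
    using \<open>q > 0\<close> by (simp add: conj_poly_def map_poly_pCons pcompose_pCons)
  finally show ?case .
qed

lemma irreducible_not_dvd_monom:
  fixes f :: "'a::field poly"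
  assumes "irreducible f" "coeff f 0 \<noteq> 0"
  shows "\<not> f dvd monom 1 n"
proof
  assume "f dvd monom 1 n"
  then have "f dvd [:0, 1:] ^ n" by (simp add: monom_altdef)
  then have "f dvd [:0, 1:]"
    using assms(1) field_poly_irreducible_imp_prime prime_elem_dvd_power by blast
  then have "[:0, 1:] dvd f"
    using assms(1) irreducibleD'[OF irreducible_linear_field_poly] irreducible_not_unit
    by (metis one_neq_zero)
  then have "poly f 0 = 0" using poly_eq_0_iff_dvd[of f 0] by simp
  then show False using assms(2) by (simp add: poly_0_coeff_0)
qed

lemma dvd_dagger_poly_pcompose_monom:
  fixes f G :: "'a::field poly"
  assumes "prime CHAR('a)" "q = CHAR('a) ^ k"
    and "irreducible f" "coeff f 0 \<noteq> 0" "f dvd monom 1 K - 1" "K > 0"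
    and "f dvd pcompose G (monom 1 m)"
  shows "f dvd pcompose (dagger_poly q G) (monom 1 (m * (K - 1) * q))"
proof -
  define R where "R = pcompose (reflect_poly G) (monom 1 (m * (K - 1)))"
  have "q > 0" using assms(1,2) by (simp add: prime_gt_0_nat)
  have "monom 1 m * monom 1 (m * (K - 1)) = (monom 1 (K * m) :: 'a poly)"
    using \<open>K > 0\<close> by (simp add: mult_monom algebra_simps)
  then have "f dvd monom 1 m * monom 1 (m * (K - 1)) - 1"
    using assms(5) monom_minus_one_dvd dvd_trans by metis
  then have "f dvd monom 1 m ^ degree G * R - pcompose G (monom 1 m)"
    unfolding R_def using reflect_poly_pcompose_cong dvd_trans by blast
  then have "f dvd monom 1 (m * degree G) * R"
    using assms(7) by (simp add: dvd_diff_left_iff monom_power mult.commute)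
  then have "f dvd R"
    using assms(3,4) irreducible_not_dvd_monom field_poly_irreducible_imp_prime
      prime_elem_dvd_mult_iff
    by blast
  then have "f dvd R ^ q" using \<open>q > 0\<close> dvd_trans dvd_power by blast
  also have "R ^ q = pcompose (conj_poly q (reflect_poly G)) (monom 1 (m * (K - 1) * q))"
    unfolding R_def by (rule frobenius_pcompose_monom[OF assms(1,2)])
  also have "\<dots> dvd pcompose (dagger_poly q G) (monom 1 (m * (K - 1) * q))"
    using \<open>q > 0\<close>
    by (simp add: dagger_poly_def recip_poly_def conj_poly_smult pcompose_smult dvd_smult)
  finally show ?thesis .
qed

lemma dvd_of_common_irreducible_factor_pcompose:
  fixes f g h r :: "'a::field poly"
  assumes "irreducible f" "irreducible g" "f dvd pcompose g r" "f dvd pcompose h r"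
  shows "g dvd h"
proof -
  \<comment> \<open>The polynomials \<open>a\<close> with \<open>f dvd pcompose a r\<close> form an ideal,
    generated by its nonzero element \<open>a\<close> of least degree.\<close>
  define S where "S = {a. a \<noteq> 0 \<and> f dvd pcompose a r}"
  have "g \<in> S" using assms(2,3) by (auto simp: S_def)
  then obtain a where "a \<in> S" and a_min: "\<And>b. b \<in> S \<Longrightarrow> degree a \<le> degree b"
    using ex_has_least_nat[of "\<lambda>a. a \<in> S" g degree] by blast
  then have "a \<noteq> 0" "f dvd pcompose a r" by (auto simp: S_def)
  have a_dvd: "a dvd b" if "f dvd pcompose b r" for b
  proof (rule ccontr)
    assume "\<not> a dvd b"
    then have "b mod a \<noteq> 0" by (simp add: mod_eq_0_iff_dvd)
    moreover have "f dvd pcompose (b - b div a * a) r"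
      using that \<open>f dvd pcompose a r\<close> by (simp add: pcompose_diff pcompose_mult)
    ultimately have "b mod a \<in> S" by (simp add: S_def minus_div_mult_eq_mod)
    then show False
      using a_min degree_mod_less'[OF \<open>a \<noteq> 0\<close> \<open>b mod a \<noteq> 0\<close>] by fastforce
  qed
  have "\<not> is_unit a"
    using \<open>f dvd pcompose a r\<close> assms(1) is_unit_pcompose dvd_unit_imp_unit irreducible_not_unit
    by blast
  then have "g dvd a" using irreducibleD'[OF assms(2) a_dvd[OF assms(3)]] by blast
  then show ?thesis using a_dvd[OF assms(4)] by (rule dvd_trans)
qed

lemma prime_elem_dvd_pcompose_prod_mset:
  assumes "prime_elem f" "f dvd pcompose (prod_mset A) r"
  shows "\<exists>p\<in>#A. f dvd pcompose p r"
  using assms(2)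
proof (induction A)
  case empty
  then show ?case using assms(1) by (simp add: pcompose_1 prime_elem_not_unit)
next
  case (add p A)
  then show ?case using assms(1) by (auto simp: pcompose_mult prime_elem_dvd_mult_iff)
qed

lemma irreducible_dvd_pcompose_monic_factorE:
  fixes f P r :: "'a::field poly"
  assumes "irreducible f" "P \<noteq> 0" "f dvd pcompose P r"
  obtains g where "irreducible g" "lead_coeff g = 1" "g dvd P" "f dvd pcompose g r"
proof -
  obtain A where A: "prod_mset A = smult (inverse (lead_coeff P)) P"
      "\<And>p. p \<in># A \<Longrightarrow> prime_elem p"
    using field_poly_prod_mset_prime_factorization[OF assms(2)]
      field_poly_in_prime_factorization_imp_prime by blast
  have "f dvd pcompose (prod_mset A) r"
    using assms(3) by (simp add: A(1) pcompose_smult dvd_smult)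
  then obtain p where "p \<in># A" "f dvd pcompose p r"
    using prime_elem_dvd_pcompose_prod_mset field_poly_irreducible_imp_prime assms(1) by blast
  define g where "g = smult (inverse (lead_coeff p)) p"
  have "prime_elem p" using A(2) \<open>p \<in># A\<close> .
  then have "p \<noteq> 0" "irreducible p" by (simp_all add: prime_elem_imp_irreducible)
  have "is_unit [:inverse (lead_coeff p):]"
    using \<open>p \<noteq> 0\<close> by (simp add: is_unit_const_poly_iff dvd_field_iff)
  moreover have "g = [:inverse (lead_coeff p):] * p" by (simp add: g_def)
  ultimately have "irreducible g" using \<open>irreducible p\<close> irreducible_mult_unit_left by blast
  moreover have "lead_coeff g = 1" using \<open>p \<noteq> 0\<close> by (simp add: g_def)
  moreover have "g dvd P"
  proof -
    have "g dvd p" using \<open>p \<noteq> 0\<close> by (simp add: g_def smult_dvd_iff)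
    also have "p dvd prod_mset A" using \<open>p \<in># A\<close> by (rule dvd_prod_mset)
    also have "prod_mset A dvd P" using assms(2) by (simp add: A(1) smult_dvd_iff)
    finally show ?thesis .
  qed
  moreover have "f dvd pcompose g r"
    using \<open>f dvd pcompose p r\<close> by (simp add: g_def pcompose_smult dvd_smult)
  ultimately show ?thesis using that by blast
qed

lemma monic_dvd_imp_eq:
  fixes g h :: "'a::field poly"
  assumes "g dvd h" "degree h = degree g" "lead_coeff g = 1" "lead_coeff h = 1"
  shows "h = g"
proof -
  obtain k where k: "h = g * k" using assms(1) by blast
  with assms(4) have "g \<noteq> 0" "k \<noteq> 0" by auto
  then have "degree k = 0" using k assms(2) by (simp add: degree_mult_eq)
  then obtain c where c: "k = [:c:]" by (rule degree_eq_zeroE)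
  have "lead_coeff h = lead_coeff g * c" using k c by (simp add: lead_coeff_mult)
  then have "c = 1" using assms(3,4) by (metis mult_1)
  then show ?thesis using k c by simp
qed

lemma
  fixes g :: "'a::field poly"
  assumes "coeff g 0 \<noteq> 0" "q > 0"
  shows degree_dagger_poly: "degree (dagger_poly q g) = degree g"
    and lead_coeff_dagger_poly: "lead_coeff (dagger_poly q g) = 1"
proof -
  define r where "r = smult (inverse (coeff g 0)) (reflect_poly g)"
  have "degree r = degree g" "lead_coeff r = 1"
    using assms(1) by (simp_all add: r_def coeff_reflect_poly)
  moreover have "dagger_poly q g = map_poly (\<lambda>a. a ^ q) r"
    by (simp add: dagger_poly_def recip_poly_def conj_poly_def r_def)
  ultimately show "degree (dagger_poly q g) = degree g" "lead_coeff (dagger_poly q g) = 1"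
    using assms(2) lead_coeff_map_poly_nz[of "\<lambda>a. a ^ q" r] by (simp_all add: degree_map_poly)
qed

lemma SCRIM_if_SCRIM_dvd_pcompose_monom:
  fixes f g :: "'a::field poly"
  assumes "prime CHAR('a)" "q = CHAR('a) ^ k"
    and "SCRIM q f" "f dvd monom 1 K - 1" "K > 0"
    and "irreducible g" "lead_coeff g = 1" "coeff g 0 \<noteq> 0" "f dvd pcompose g (monom 1 m)"
  shows "SCRIM q g"
proof -
  define L where "L = (K - 1) * q"
  have f: "irreducible f" "coeff f 0 \<noteq> 0" "dagger_poly q f = f"
    using assms(3) by (simp_all add: SCRIM_def)
  have "f dvd pcompose (dagger_poly q f) (monom 1 L)"
    using dvd_dagger_poly_pcompose_monom[OF assms(1,2) f(1,2) assms(4,5), of f 1]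
    by (simp add: L_def monom_altdef)
  also have "\<dots> = pcompose f (monom 1 L)" using f(3) by simp
  also have "\<dots> dvd pcompose (pcompose g (monom 1 m)) (monom 1 L)"
    using assms(9) by (auto simp: pcompose_mult elim!: dvdE)
  also have "\<dots> = pcompose g (monom 1 (m * L))"
    by (simp add: pcompose_monom_monom flip: pcompose_assoc)
  finally have "f dvd pcompose g (monom 1 (m * L))" .
  moreover have "f dvd pcompose (dagger_poly q g) (monom 1 (m * L))"
    using dvd_dagger_poly_pcompose_monom[OF assms(1,2) f(1,2) assms(4,5,9)]
    by (simp add: L_def mult.assoc)
  ultimately have "g dvd dagger_poly q g"
    using dvd_of_common_irreducible_factor_pcompose f(1) assms(6) by blast
  moreover have "q > 0" using assms(1,2) by (simp add: prime_gt_0_nat)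
  ultimately have "dagger_poly q g = g"
    using monic_dvd_imp_eq assms(7,8) degree_dagger_poly lead_coeff_dagger_poly by blast
  then show ?thesis using assms(6,7,8) by (simp add: SCRIM_def)
qed

lemma Omega_subset_Omega_mult: "(Omega q n :: 'a::field poly set) \<subseteq> Omega q (n * m)"
  unfolding Omega_def by (auto intro: dvd_trans[OF _ monom_minus_one_dvd])

lemma Omega_mult_dvd_pcomposeE:
  fixes f :: "'a::field poly"
  assumes "prime CHAR('a)" "q = CHAR('a) ^ k" "n1 > 0" "n2 > 0" "f \<in> Omega q (n1 * n2)"
  obtains g where "g \<in> Omega q n1" "f dvd pcompose g (monom 1 n2)"
proof -
  have f: "SCRIM q f" "f dvd monom 1 (n1 * n2) - 1" using assms(5) by (simp_all add: Omega_def)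
  have "pcompose (monom 1 n1 - 1) (monom 1 n2) = (monom 1 (n1 * n2) - 1 :: 'a poly)"
    by (simp add: pcompose_diff pcompose_1 pcompose_monom_monom)
  then have "f dvd pcompose (monom 1 n1 - 1) (monom 1 n2)" using f(2) by simp
  moreover have "monom 1 n1 - 1 \<noteq> (0 :: 'a poly)" using assms(3) by (simp add: monom_eq_1_iff)
  moreover have "irreducible f" using f(1) by (simp add: SCRIM_def)
  ultimately obtain g where g: "irreducible g" "lead_coeff g = 1" "g dvd monom 1 n1 - 1"
      "f dvd pcompose g (monom 1 n2)"
    using irreducible_dvd_pcompose_monic_factorE by blast
  have "coeff g 0 \<noteq> 0"
  proof
    assume "coeff g 0 = 0"
    then have "poly g 0 = 0" by (simp add: poly_0_coeff_0)
    moreover obtain h where "monom 1 n1 - 1 = g * h" using g(3) by (rule dvdE)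
    ultimately have "poly (monom 1 n1 - 1) 0 = (0 :: 'a)" by simp
    then show False using assms(3) by (simp add: poly_monom power_0_left)
  qed
  then have "SCRIM q g"
    using SCRIM_if_SCRIM_dvd_pcompose_monom[OF assms(1,2) f] g assms(3,4) by simp
  then show ?thesis using that g(3,4) by (simp add: Omega_def)
qed

theorem corollary2p10:
  fixes q n1 n2 :: nat
  assumes "CARD('a::{field,finite}) = q ^ 2"
    and "prime_power q"
    and "coprime n1 n2" and "odd n1" and "odd n2" and "n1 > 0" and "n2 > 0"
    and "coprime n1 q" and "coprime n2 q"
    and "(Omega q n1 :: 'a poly set) = {[:-1, 1:]}"
    and "(Omega q n2 :: 'a poly set) = {[:-1, 1:]}"
  shows "card (Omega q (n1 * n2) :: 'a poly set)
           = card (Omega q n1 :: 'a poly set) * card (Omega q n2 :: 'a poly set)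
         \<and> card (Omega q n1 :: 'a poly set) * card (Omega q n2 :: 'a poly set) = 1"
proof -
  obtain k where char: "prime CHAR('a)" "q = CHAR('a) ^ k"
    using prime_power_CHARE[OF assms(1,2)] by blast
  have "Omega q (n1 * n2) \<subseteq> (Omega q n2 :: 'a poly set)"
  proof
    fix f :: "'a poly"
    assume f: "f \<in> Omega q (n1 * n2)"
    then obtain g where "g \<in> Omega q n1" "f dvd pcompose g (monom 1 n2)"
      using Omega_mult_dvd_pcomposeE[OF char assms(6,7)] by blast
    then have "f dvd monom 1 n2 - 1" using assms(10) by (simp add: pcompose_x_minus_one)
    then show "f \<in> Omega q n2" using f by (simp add: Omega_def)
  qed
  moreover have "Omega q n1 \<subseteq> (Omega q (n1 * n2) :: 'a poly set)"
    by (rule Omega_subset_Omega_mult)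
  ultimately have "(Omega q (n1 * n2) :: 'a poly set) = {[:-1, 1:]}"
    using assms(10,11) by blast
  then show ?thesis using assms(10,11) by simp
qed

end
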